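(* Let $\{\ket{j}\}_{j=0}^{7}$ be the computational basis of three qubits, where $\ket{j}=\ket{j_1j_2j_3}$ with $j=4j_1+2j_2+j_3$, and let $$\ket{\psi_3}=\frac{1}{4\sqrt{2}}\left(\ket{0}+\ket{1}+\ket{2}+\ket{3}+\ket{4}+\ket{5}+\ket{6}-5\ket{7}\right),\qquad \rho_3=\ket{\psi_3}\bra{\psi_3}.$$ Denote by $A_3,B_3,C_3$ the first, second and third qubits of $\rho_3$. Then $$D(B_3C_3|A_3)=D(A_3C_3|B_3)=D(A_3B_3|C_3)=D(C_3|A_3B_3)=D(B_3|A_3C_3)=D(A_3|B_3C_3)$$ $$=-\tfrac{1}{16}(8+\sqrt{37})\log\left(\tfrac{1}{16}(8+\sqrt{37})\right)-\tfrac{1}{16}(8-\sqrt{37})\log\left(\tfrac{1}{16}(8-\sqrt{37})\right)\approx 0.52,$$ and moreover $D(B_3C_3|A_3)=S(\rho_{A_3})$ and $D(C_3|A_3B_3)=S(\rho_{A_3B_3})$.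
   Context: Logarithms are base 2, and $S(\sigma)=-\mathrm{Tr}(\sigma\log\sigma)$ is the von Neumann entropy; $\rho_{A_3}$ and $\rho_{A_3B_3}$ denote the reduced states of $\rho_3$ on the first qubit and on the first two qubits. For a state $\rho_{XY}$ on a bipartite system $X\otimes Y$ (here $X$ and $Y$ are complementary groups of the three qubits), the quantum discord with measurement on $X$ is $$D(Y|X)=\min_{\{E_a\}}\sum_a p_a S(\rho_{Y|a})+S(\rho_X)-S(\rho_{XY}),$$ where the minimum is over all POVMs $\{E_a\}$ on $X$ ($E_a\ge 0$, $\sum_a E_a=I$), $p_a=\mathrm{Tr}((E_a\otimes I)\rho_{XY})$, $\rho_{Y|a}=\mathrm{Tr}_X((E_a\otimes I)\rho_{XY})/p_a$, and $\rho_X,\rho_Y$ are reduced states. *)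

theory Defs
  imports "Jordan_Normal_Form.Jordan_Normal_Form"
begin

definition mtrace :: "complex mat \<Rightarrow> complex" where
  "mtrace A = (\<Sum>i<dim_row A. A $$ (i,i))"

text \<open>Positive semidefinite d x d complex matrix: the quadratic form v* A v is real and
  nonnegative for every v in C^d (for complex matrices this implies Hermitian).\<close>
definition psd :: "nat \<Rightarrow> complex mat \<Rightarrow> bool" where
  "psd d A \<longleftrightarrow> A \<in> carrier_mat d d \<and>
     (\<forall>v :: nat \<Rightarrow> complex.
        let q = (\<Sum>i<d. \<Sum>j<d. cnj (v i) * A $$ (i,j) * v j) in Im q = 0 \<and> Re q \<ge> 0)"

definition eta :: "real \<Rightarrow> real" where
  "eta x = (if x \<le> 0 then 0 else - x * log 2 x)"

text \<open>Von Neumann entropy S(sigma) = - Tr(sigma log2 sigma) = sum over the eigenvalues of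
  sigma, counted with (algebraic) multiplicity, of - lambda log2 lambda.\<close>
definition vn_entropy :: "complex mat \<Rightarrow> real" where
  "vn_entropy A = (\<Sum>ev\<in>{ev. eigenvalue A ev}. real (order ev (char_poly A)) * eta (Re ev))"

text \<open>Bipartite system X (x) Y of dimensions dX, dY; basis index a*dY + b.\<close>
definition ptrace_Y :: "nat \<Rightarrow> nat \<Rightarrow> complex mat \<Rightarrow> complex mat" where
  "ptrace_Y dX dY R = mat dX dX (\<lambda>(a,a'). \<Sum>b<dY. R $$ (a*dY+b, a'*dY+b))"

definition ptrace_X :: "nat \<Rightarrow> nat \<Rightarrow> complex mat \<Rightarrow> complex mat" where
  "ptrace_X dX dY R = mat dY dY (\<lambda>(b,b'). \<Sum>a<dX. R $$ (a*dY+b, a*dY+b'))"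

text \<open>E (x) I_dY\<close>
definition kron_id :: "nat \<Rightarrow> nat \<Rightarrow> complex mat \<Rightarrow> complex mat" where
  "kron_id dX dY E = mat (dX*dY) (dX*dY)
     (\<lambda>(i,j). if i mod dY = j mod dY then E $$ (i div dY, j div dY) else 0)"

definition is_povm :: "nat \<Rightarrow> nat \<Rightarrow> (nat \<Rightarrow> complex mat) \<Rightarrow> bool" where
  "is_povm d m E \<longleftrightarrow> (\<forall>a<m. psd d (E a)) \<and>
     (\<forall>i<d. \<forall>j<d. (\<Sum>a<m. E a $$ (i,j)) = (if i = j then 1 else 0))"

text \<open>sum_a p_a S(rho_{Y|a}) for the POVM E measured on X.\<close>
definition meas_cond_entropy :: "nat \<Rightarrow> nat \<Rightarrow> complex mat \<Rightarrow> nat \<Rightarrow> (nat \<Rightarrow> complex mat) \<Rightarrow> real" where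
  "meas_cond_entropy dX dY R m E =
     (\<Sum>a<m. let M = kron_id dX dY (E a) * R; p = Re (mtrace M)
             in p * vn_entropy (complex_of_real (1 / p) \<cdot>\<^sub>m ptrace_X dX dY M))"

text \<open>Quantum discord D(Y|X) with measurement on X.\<close>
definition discord :: "nat \<Rightarrow> nat \<Rightarrow> complex mat \<Rightarrow> real" where
  "discord dX dY R =
     (INF mE \<in> {(m, E). is_povm dX m E}. meas_cond_entropy dX dY R (fst mE) (snd mE))
     + vn_entropy (ptrace_Y dX dY R) - vn_entropy R"

text \<open>Qubits are numbered 0 (A, first, weight 4), 1 (B, weight 2), 2 (C, weight 1).
  reorder ord R re-expresses the 3-qubit operator R with the qubits in the order
  ord!0, ord!1, ord!2 (ord!0 becoming the most significant one).\<close>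
definition old_index :: "nat list \<Rightarrow> nat \<Rightarrow> nat" where
  "old_index ord i = (\<Sum>k<3. ((i div 2^(2-k)) mod 2) * 2^(2 - ord!k))"

definition reorder :: "nat list \<Rightarrow> complex mat \<Rightarrow> complex mat" where
  "reorder ord R = mat 8 8 (\<lambda>(i,j). R $$ (old_index ord i, old_index ord j))"

definition psi3 :: "complex vec" where
  "psi3 = vec 8 (\<lambda>j. (if j = 7 then -5 else 1) / (4 * complex_of_real (sqrt 2)))"

definition rho3 :: "complex mat" where
  "rho3 = mat 8 8 (\<lambda>(i,j). psi3 $ i * cnj (psi3 $ j))"

end

theory Submission
  imports Defs "HOL-Analysis.Convex"
begin

text \<open>For a pure state |phi><phi| on X (x) Y the discord D(Y|X) equals S(rho_X): the measured
  conditional entropy is never negative, because every post-measurement state of Y is a density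
  matrix, and it vanishes for the measurement in the computational basis of X, which leaves Y in
  pure states; moreover S(|phi><phi|) = 0. The amplitude of psi3 only depends on whether all three
  qubits are 1, so rho3 is invariant under qubit permutations and all six discords reduce to
  S(rho_A) and S(rho_AB). Both marginals have the nonzero eigenvalues (8 +- sqrt 37)/16, the roots
  of x^2 - x + 27/256.\<close>

section \<open>Small determinants and characteristic polynomials\<close>

lemma det_expand_row0:
  assumes A: "A \<in> carrier_mat (Suc n) (Suc n)"
  shows "det A = (\<Sum>j<Suc n. A $$ (0,j) * ((-1)^j * det (mat_delete A 0 j)))"
  using laplace_expansion_row[OF A, of 0] by (simp add: cofactor_def del: sum.lessThan_Suc)

lemma mat_delete_row0_index:
  assumes A: "A \<in> carrier_mat (Suc n) (Suc n)" and j: "j < Suc n" and i': "i' < n" and j': "j' < n"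
  shows "mat_delete A 0 j $$ (i', j') = A $$ (Suc i', insert_index j j')"
  using mat_delete_index[OF A _ j i' j', of 0] by (simp add: insert_index_def)

lemma mat_delete_carrier_Suc:
  "A \<in> carrier_mat (Suc n) (Suc n) \<Longrightarrow> mat_delete A i j \<in> carrier_mat n n"
  using mat_delete_carrier[of A "Suc n" "Suc n" i j] by simp

lemma det_2x2:
  assumes A: "A \<in> carrier_mat 2 2"
  shows "det A = A$$(0,0)*A$$(1,1) - A$$(0,1)*A$$(1,0)"
proof -
  have A': "A \<in> carrier_mat (Suc 1) (Suc 1)" using A by (simp add: eval_nat_numeral)
  have minor: "det (mat_delete A 0 j) = A $$ (1, insert_index j 0)" if "j < 2" for j
    using det_single[OF mat_delete_carrier_Suc[OF A', of 0 j]] mat_delete_row0_index[OF A', of j 0 0] that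
    by simp
  show ?thesis unfolding det_expand_row0[OF A'] by (simp add: minor insert_index_def)
qed

lemma det_3x3:
  assumes A: "A \<in> carrier_mat 3 3"
  shows "det A = A$$(0,0)*(A$$(1,1)*A$$(2,2) - A$$(1,2)*A$$(2,1))
      - A$$(0,1)*(A$$(1,0)*A$$(2,2) - A$$(1,2)*A$$(2,0))
      + A$$(0,2)*(A$$(1,0)*A$$(2,1) - A$$(1,1)*A$$(2,0))"
proof -
  have A': "A \<in> carrier_mat (Suc 2) (Suc 2)" using A by (simp add: eval_nat_numeral)
  have minor: "det (mat_delete A 0 j) = A $$ (1, insert_index j 0) * A $$ (2, insert_index j 1)
      - A $$ (1, insert_index j 1) * A $$ (2, insert_index j 0)" if "j < 3" for j
    using det_2x2[OF mat_delete_carrier_Suc[OF A', of 0 j]] that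
    by (simp add: mat_delete_row0_index[OF A'] eval_nat_numeral)
  show ?thesis
    unfolding det_expand_row0[OF A'] by (simp add: minor insert_index_def eval_nat_numeral algebra_simps)
qed

lemma det_4x4:
  assumes A: "A \<in> carrier_mat 4 4"
  shows "det A = A$$(0,0)*(A$$(1,1)*(A$$(2,2)*A$$(3,3) - A$$(2,3)*A$$(3,2))
      - A$$(1,2)*(A$$(2,1)*A$$(3,3) - A$$(2,3)*A$$(3,1))
      + A$$(1,3)*(A$$(2,1)*A$$(3,2) - A$$(2,2)*A$$(3,1)))
    - A$$(0,1)*(A$$(1,0)*(A$$(2,2)*A$$(3,3) - A$$(2,3)*A$$(3,2))
      - A$$(1,2)*(A$$(2,0)*A$$(3,3) - A$$(2,3)*A$$(3,0))
      + A$$(1,3)*(A$$(2,0)*A$$(3,2) - A$$(2,2)*A$$(3,0)))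
    + A$$(0,2)*(A$$(1,0)*(A$$(2,1)*A$$(3,3) - A$$(2,3)*A$$(3,1))
      - A$$(1,1)*(A$$(2,0)*A$$(3,3) - A$$(2,3)*A$$(3,0))
      + A$$(1,3)*(A$$(2,0)*A$$(3,1) - A$$(2,1)*A$$(3,0)))
    - A$$(0,3)*(A$$(1,0)*(A$$(2,1)*A$$(3,2) - A$$(2,2)*A$$(3,1))
      - A$$(1,1)*(A$$(2,0)*A$$(3,2) - A$$(2,2)*A$$(3,0))
      + A$$(1,2)*(A$$(2,0)*A$$(3,1) - A$$(2,1)*A$$(3,0)))"
proof -
  have A': "A \<in> carrier_mat (Suc 3) (Suc 3)" using A by (simp add: eval_nat_numeral)
  let ?c = "insert_index"
  have minor: "det (mat_delete A 0 j) =
       A$$(1,?c j 0)*(A$$(2,?c j 1)*A$$(3,?c j 2) - A$$(2,?c j 2)*A$$(3,?c j 1))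
     - A$$(1,?c j 1)*(A$$(2,?c j 0)*A$$(3,?c j 2) - A$$(2,?c j 2)*A$$(3,?c j 0))
     + A$$(1,?c j 2)*(A$$(2,?c j 0)*A$$(3,?c j 1) - A$$(2,?c j 1)*A$$(3,?c j 0))" if "j < 4" for j
    using det_3x3[OF mat_delete_carrier_Suc[OF A', of 0 j]] that
    by (simp add: mat_delete_row0_index[OF A'] eval_nat_numeral)
  show ?thesis
    unfolding det_expand_row0[OF A'] by (simp add: minor insert_index_def eval_nat_numeral algebra_simps)
qed

lemma char_poly_eqI:
  assumes A: "A \<in> carrier_mat n n" and p: "\<And>x. det (- char_matrix A x) = poly p x"
  shows "char_poly A = (p :: complex poly)"
proof (rule poly_eq_poly_eq_iff[THEN iffD1], rule ext)
  show "poly (char_poly A) x = poly p x" for x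
    using char_poly_matrix[OF A] p by simp
qed

lemma order_linear_factor: "order a [:- b, 1:] = (if a = b then 1 else 0)"
  for a b :: "'a :: idom"
proof (cases "a = b")
  case True
  then show ?thesis using order_power_n_n[of b 1] by simp
next
  case False
  then show ?thesis by (simp add: order_0I)
qed

lemma vn_entropy_two_eigenvalues:
  fixes a b :: real
  assumes A: "A \<in> carrier_mat n n"
    and chi: "char_poly A = [:0, 1:] ^ m * ([:- of_real a, 1:] * [:- of_real b, 1:])"
    and ab: "a \<noteq> b" "a \<noteq> 0" "b \<noteq> 0"
  shows "vn_entropy A = eta a + eta b"
proof -
  let ?f = "\<lambda>ev. real (order ev (char_poly A)) * eta (Re ev)"
  have eigenvalues: "{ev. eigenvalue A ev} \<subseteq> {0, of_real a, of_real b}"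
    "of_real a \<in> {ev. eigenvalue A ev}" "of_real b \<in> {ev. eigenvalue A ev}"
    unfolding eigenvalue_root_char_poly[OF A] chi poly_mult poly_power by auto
  have "order (of_real c) (char_poly A) = 1" if "c = a \<or> c = b" for c
  proof -
    have nz: "[:0, 1:] ^ m * ([:- of_real a, 1:] * [:- of_real b, 1:]) \<noteq> (0 :: complex poly)"
      "[:- of_real a, 1:] * [:- of_real b, 1:] \<noteq> (0 :: complex poly)"
      by (auto simp only: mult_eq_0_iff power_eq_0_iff pCons_eq_0_iff one_neq_zero)
    have "order (of_real c) ([:0, 1:] ^ m) = 0"
      using that ab by (intro order_0I) auto
    then show ?thesis
      unfolding chi order_mult[OF nz(1)] order_mult[OF nz(2)] order_linear_factor
      using that ab by auto
  qed
  then have "?f (of_real a) + ?f (of_real b) = eta a + eta b"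
    by simp
  moreover have "vn_entropy A = sum ?f {of_real a, of_real b}"
    unfolding vn_entropy_def
    using eigenvalues finite_subset[OF eigenvalues(1)]
    by (intro sum.mono_neutral_right) (auto simp: eta_def)
  ultimately show ?thesis
    using ab(1) by simp
qed

section \<open>Positive semidefinite matrices\<close>

definition sesq :: "nat \<Rightarrow> complex mat \<Rightarrow> (nat \<Rightarrow> complex) \<Rightarrow> (nat \<Rightarrow> complex) \<Rightarrow> complex" where
  "sesq d A x y = (\<Sum>i<d. \<Sum>j<d. cnj (x i) * A $$ (i,j) * y j)"

lemma psd_iff_sesq:
  "psd d A \<longleftrightarrow> A \<in> carrier_mat d d \<and> (\<forall>v. Im (sesq d A v v) = 0 \<and> 0 \<le> Re (sesq d A v v))"
  unfolding psd_def sesq_def Let_def ..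

lemma psdD:
  assumes "psd d A"
  shows "A \<in> carrier_mat d d" "Im (sesq d A v v) = 0" "0 \<le> Re (sesq d A v v)"
  using assms unfolding psd_iff_sesq by auto

lemma sesq_add_scaled:
  "sesq d A (\<lambda>i. x i + of_real t * y i) (\<lambda>i. x i + of_real t * y i)
   = sesq d A x x + of_real t * (sesq d A x y + sesq d A y x) + (of_real t)\<^sup>2 * sesq d A y y"
proof -
  have "sesq d A (\<lambda>i. x i + of_real t * y i) (\<lambda>i. x i + of_real t * y i)
     = (\<Sum>i<d. \<Sum>j<d. cnj (x i) * A $$ (i,j) * x j
          + (of_real t * (cnj (x i) * A $$ (i,j) * y j) + of_real t * (cnj (y i) * A $$ (i,j) * x j))
          + (of_real t)\<^sup>2 * (cnj (y i) * A $$ (i,j) * y j))"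
    unfolding sesq_def by (intro sum.cong refl) (simp add: algebra_simps power2_eq_square)
  then show ?thesis
    unfolding sesq_def by (simp only: sum.distrib sum_distrib_left distrib_left)
qed

lemma sesq_Cauchy_Schwarz:
  assumes A: "psd d A"
  shows "Re (sesq d A x y + sesq d A y x) \<le> 2 * sqrt (Re (sesq d A x x) * Re (sesq d A y y))"
proof -
  define \<alpha> \<beta> \<gamma> where "\<alpha> = Re (sesq d A x x)" and "\<beta> = Re (sesq d A y y)"
    and "\<gamma> = Re (sesq d A x y + sesq d A y x)"
  have \<beta>: "0 \<le> \<beta>" using psdD(3)[OF A] unfolding \<beta>_def .
  have quadratic: "0 \<le> \<alpha> + t * \<gamma> + t\<^sup>2 * \<beta>" for t :: real
    using psdD(3)[OF A, of "\<lambda>i. x i + of_real t * y i"]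
    unfolding sesq_add_scaled \<alpha>_def \<beta>_def \<gamma>_def by (simp flip: of_real_power)
  have "\<gamma>\<^sup>2 \<le> 4 * \<alpha> * \<beta>"
  proof (cases "\<beta> = 0")
    case True
    have "\<gamma> = 0"
    proof (rule ccontr)
      assume "\<gamma> \<noteq> 0"
      then show False
        using quadratic[of "- (\<alpha> + 1) / \<gamma>"] True by simp
    qed
    then show ?thesis using True by simp
  next
    case False
    then have "0 < \<beta>" using \<beta> by simp
    moreover have "\<alpha> + (- \<gamma> / (2*\<beta>)) * \<gamma> + (- \<gamma> / (2*\<beta>))\<^sup>2 * \<beta> = (4 * \<alpha> * \<beta> - \<gamma>\<^sup>2) / (4 * \<beta>)"
      using \<open>0 < \<beta>\<close> by (simp add: field_simps power2_eq_square)
    ultimately show ?thesis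
      using quadratic[of "- \<gamma> / (2*\<beta>)"] by (simp add: zero_le_divide_iff)
  qed
  then have "\<gamma> \<le> sqrt (4 * \<alpha> * \<beta>)"
    using real_le_rsqrt by blast
  then show ?thesis
    unfolding \<alpha>_def \<beta>_def \<gamma>_def by (simp add: real_sqrt_mult)
qed

lemma sesq_single:
  assumes "i < d" "j < d"
  shows "sesq d A (\<lambda>l. if l = i then a else 0) (\<lambda>l. if l = j then b else 0) = cnj a * A $$ (i,j) * b"
proof -
  have row: "(\<Sum>m<d. cnj (if l = i then a else 0) * A $$ (l, m) * (if m = j then b else 0))
      = (if l = i then cnj a * A $$ (i,j) * b else 0)" for l
    using assms(2) by (cases "l = i") (simp_all add: if_distrib[of "\<lambda>y. _ * y"] cong: if_cong)
  show ?thesis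
    using assms(1) by (simp add: sesq_def row)
qed

lemma psd_diag_nonneg:
  assumes "psd d A" "i < d"
  shows "0 \<le> Re (A $$ (i,i))"
  using psdD(3)[OF assms(1), of "\<lambda>l. if l = i then 1 else 0"] sesq_single[OF assms(2,2)] by simp

lemma psd_trace_nonneg:
  assumes "psd d A"
  shows "0 \<le> Re (mtrace A)"
  using psdD(1)[OF assms] psd_diag_nonneg[OF assms] unfolding mtrace_def by (auto intro: sum_nonneg)

lemma psd_sesq_le_trace:
  assumes A: "psd d A"
  shows "Re (sesq d A v v) \<le> Re (mtrace A) * (\<Sum>i<d. (cmod (v i))\<^sup>2)"
proof -
  define e where "e i = (\<lambda>l. if l = i then v i else 0)" for i
  define r where "r i = cmod (v i) * sqrt (Re (A $$ (i,i)))" for i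
  have diag: "Re (sesq d A (e i) (e i)) = (cmod (v i))\<^sup>2 * Re (A $$ (i,i))" if "i < d" for i
  proof -
    have "sesq d A (e i) (e i) = of_real ((cmod (v i))\<^sup>2) * A $$ (i,i)"
      unfolding e_def sesq_single[OF that that] complex_norm_square by (simp only: ac_simps)
    then show ?thesis
      by simp
  qed
  have pair: "Re (sesq d A (e i) (e j) + sesq d A (e j) (e i)) \<le> 2 * (r i * r j)"
    if "i < d" "j < d" for i j
  proof -
    have "sqrt (Re (sesq d A (e i) (e i)) * Re (sesq d A (e j) (e j))) = r i * r j"
      unfolding diag[OF that(1)] diag[OF that(2)] r_def by (simp add: real_sqrt_mult)
    with sesq_Cauchy_Schwarz[OF A, of "e i" "e j"] show ?thesis
      by simp
  qed
  have expand: "sesq d A v v = (\<Sum>i<d. \<Sum>j<d. sesq d A (e i) (e j))"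
    unfolding sesq_def[of d A v v] e_def by (intro sum.cong refl) (simp add: sesq_single)
  have swap: "(\<Sum>i<d. \<Sum>j<d. sesq d A (e j) (e i)) = (\<Sum>i<d. \<Sum>j<d. sesq d A (e i) (e j))"
    by (rule sum.swap)
  have "2 * Re (sesq d A v v)
      = Re (\<Sum>i<d. \<Sum>j<d. sesq d A (e i) (e j)) + Re (\<Sum>i<d. \<Sum>j<d. sesq d A (e j) (e i))"
    unfolding swap expand by simp
  also have "\<dots> = (\<Sum>i<d. \<Sum>j<d. Re (sesq d A (e i) (e j) + sesq d A (e j) (e i)))"
    by (simp add: sum.distrib)
  also have "\<dots> \<le> (\<Sum>i<d. \<Sum>j<d. 2 * (r i * r j))"
    by (intro sum_mono pair) auto
  also have "\<dots> = 2 * (\<Sum>i<d. r i)\<^sup>2"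
    unfolding power2_eq_square sum_product by (simp only: sum_distrib_left)
  also have "\<dots> \<le> 2 * ((\<Sum>i<d. (cmod (v i))\<^sup>2) * (\<Sum>i<d. (sqrt (Re (A $$ (i,i))))\<^sup>2))"
    using Cauchy_Schwarz_ineq_sum[of "\<lambda>i. cmod (v i)" "\<lambda>i. sqrt (Re (A $$ (i,i)))" "{..<d}"]
    unfolding r_def by simp
  also have "(\<Sum>i<d. (sqrt (Re (A $$ (i,i))))\<^sup>2) = Re (mtrace A)"
    using psd_diag_nonneg[OF A] psdD(1)[OF A] by (simp add: mtrace_def)
  finally show ?thesis
    by (simp add: mult.commute)
qed

lemma nonzero_vec_norm_pos:
  assumes "v \<in> carrier_vec d" "v \<noteq> 0\<^sub>v d"
  shows "0 < (\<Sum>i<d. (cmod (v $ i))\<^sup>2)"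
proof -
  obtain i where "i < d" "v $ i \<noteq> 0"
    using assms by (metis carrier_vecD eq_vecI index_zero_vec)
  then show ?thesis
    by (intro sum_pos2[of "{..<d}" i]) auto
qed

lemma psd_eigenvalue_le_trace:
  assumes A: "psd d A" and e: "eigenvalue A e"
  shows "Re e \<le> Re (mtrace A)"
proof -
  obtain v where v: "v \<in> carrier_vec d" "v \<noteq> 0\<^sub>v d" "A *\<^sub>v v = e \<cdot>\<^sub>v v"
    using e psdD(1)[OF A] unfolding eigenvalue_def eigenvector_def by auto
  define N where "N = (\<Sum>i<d. (cmod (v $ i))\<^sup>2)"
  have Av: "(A *\<^sub>v v) $ i = (\<Sum>j<d. A $$ (i,j) * v $ j)" if "i < d" for i
    using psdD(1)[OF A] v(1) that by (auto simp: scalar_prod_def atLeast0LessThan)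
  have "sesq d A (($) v) (($) v) = (\<Sum>i<d. cnj (v $ i) * (A *\<^sub>v v) $ i)"
    unfolding sesq_def by (intro sum.cong refl) (simp add: Av sum_distrib_left mult.assoc)
  also have "\<dots> = (\<Sum>i<d. e * of_real ((cmod (v $ i))\<^sup>2))"
    using v(1,3) unfolding complex_norm_square by (intro sum.cong refl) (simp add: ac_simps)
  also have "\<dots> = e * of_real N"
    by (simp add: N_def sum_distrib_left)
  finally have "Re e * N \<le> Re (mtrace A) * N"
    using psd_sesq_le_trace[OF A, of "($) v"] by (simp add: N_def)
  moreover have "0 < N"
    unfolding N_def using v(1,2) by (rule nonzero_vec_norm_pos)
  ultimately show ?thesis
    by simp
qed

lemma sesq_smult:
  assumes "A \<in> carrier_mat d d"
  shows "sesq d (c \<cdot>\<^sub>m A) x y = c * sesq d A x y"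
  unfolding sesq_def sum_distrib_left using assms by (intro sum.cong refl) (simp add: mult_ac)

lemma psd_smult:
  assumes A: "psd d A" and c: "0 \<le> c"
  shows "psd d (of_real c \<cdot>\<^sub>m A)"
  using psdD[OF A] c unfolding psd_iff_sesq by (simp add: sesq_smult)

lemma mtrace_smult:
  assumes "A \<in> carrier_mat d d"
  shows "mtrace (c \<cdot>\<^sub>m A) = c * mtrace A"
  unfolding mtrace_def sum_distrib_left using assms by (intro sum.cong) auto

lemma eta_nonneg: "x \<le> 1 \<Longrightarrow> 0 \<le> eta x"
  unfolding eta_def by (auto simp: mult_nonneg_nonpos)

lemma eta_pos: "0 < x \<Longrightarrow> eta x = - x * log 2 x"
  by (simp add: eta_def)

lemma vn_entropy_nonneg:
  assumes "psd d A" "Re (mtrace A) \<le> 1"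
  shows "0 \<le> vn_entropy A"
  unfolding vn_entropy_def
  using psd_eigenvalue_le_trace[OF assms(1)] assms(2)
  by (intro sum_nonneg mult_nonneg_nonneg eta_nonneg) force+

section \<open>Discord of pure states\<close>

definition pure_state :: "nat \<Rightarrow> (nat \<Rightarrow> complex) \<Rightarrow> complex mat" where
  "pure_state d \<phi> = mat d d (\<lambda>(i,j). \<phi> i * cnj (\<phi> j))"

lemma pure_state_carrier: "pure_state d \<phi> \<in> carrier_mat d d"
  by (simp add: pure_state_def)

lemma eigenvalue_idempotent:
  fixes A :: "'a :: field mat"
  assumes A: "A \<in> carrier_mat d d" and idem: "A * A = A" and e: "eigenvalue A e"
  shows "e = 0 \<or> e = 1"
proof -
  obtain v where v: "v \<in> carrier_vec d" "v \<noteq> 0\<^sub>v d" "A *\<^sub>v v = e \<cdot>\<^sub>v v"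
    using e A unfolding eigenvalue_def eigenvector_def by auto
  obtain i where i: "i < d" "v $ i \<noteq> 0"
    using v(1,2) by (metis carrier_vecD eq_vecI index_zero_vec)
  have "e \<cdot>\<^sub>v v = (A * A) *\<^sub>v v"
    using idem v(3) by simp
  also have "\<dots> = A *\<^sub>v (e \<cdot>\<^sub>v v)"
    using assoc_mult_mat_vec[OF A A v(1)] v(3) by simp
  also have "\<dots> = (e * e) \<cdot>\<^sub>v v"
    using v(3) by (simp add: mult_mat_vec[OF A v(1)] smult_smult_assoc)
  finally have "e * v $ i = (e * e) * v $ i"
    using i v(1) by (metis carrier_vecD index_smult_vec(1))
  then show ?thesis
    using i(2) by auto
qed

lemma pure_state_idempotent:
  assumes "(\<Sum>i<d. (cmod (\<phi> i))\<^sup>2) = 1"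
  shows "pure_state d \<phi> * pure_state d \<phi> = pure_state d \<phi>"
proof -
  have "(\<Sum>l<d. \<phi> l * cnj (\<phi> l)) = of_real (\<Sum>l<d. (cmod (\<phi> l))\<^sup>2)"
    unfolding of_real_sum complex_norm_square ..
  then have norm: "(\<Sum>l<d. \<phi> l * cnj (\<phi> l)) = 1"
    using assms by simp
  have "(\<Sum>l<d. \<phi> i * cnj (\<phi> l) * (\<phi> l * cnj (\<phi> j)))
      = \<phi> i * cnj (\<phi> j) * (\<Sum>l<d. \<phi> l * cnj (\<phi> l))" for i j
    by (simp add: sum_distrib_left ac_simps)
  then have "(\<Sum>l<d. \<phi> i * cnj (\<phi> l) * (\<phi> l * cnj (\<phi> j))) = \<phi> i * cnj (\<phi> j)" for i j
    unfolding norm by simp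
  then show ?thesis
    by (intro eq_matI) (auto simp: pure_state_def scalar_prod_def atLeast0LessThan)
qed

lemma vn_entropy_pure_state:
  assumes "(\<Sum>i<d. (cmod (\<phi> i))\<^sup>2) = 1"
  shows "vn_entropy (pure_state d \<phi>) = 0"
  unfolding vn_entropy_def
proof (intro sum.neutral ballI)
  fix e assume "e \<in> {ev. eigenvalue (pure_state d \<phi>) ev}"
  then have "e = 0 \<or> e = 1"
    by (intro eigenvalue_idempotent[OF pure_state_carrier pure_state_idempotent[OF assms]]) simp
  then show "real (order e (char_poly (pure_state d \<phi>))) * eta (Re e) = 0"
    by (auto simp: eta_def)
qed

lemma sum_lessThan_mult:
  fixes f :: "nat \<Rightarrow> 'a :: comm_monoid_add"
  shows "(\<Sum>l<n*k. f l) = (\<Sum>a<n. \<Sum>b<k. f (a*k + b))"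
proof -
  have "(\<Sum>l<n*k. f l) = (\<Sum>a<n. sum f {a*k..<a*k + k})"
    by (rule sum.nat_group[symmetric])
  then show ?thesis
    by (simp add: sum.atLeastLessThan_shift_0 atLeast0LessThan)
qed

lemma mult_add_less_mult:
  fixes a b n k :: nat
  assumes "a < n" "b < k"
  shows "a * k + b < n * k"
proof -
  have "Suc a * k \<le> n * k"
    using assms(1) by (intro mult_le_mono1) simp
  then show ?thesis
    using assms(2) by simp
qed

lemma kron_id_carrier: "kron_id n k E \<in> carrier_mat (n*k) (n*k)"
  by (simp add: kron_id_def)

lemma kron_id_mult_pure_state_index:
  assumes E: "E \<in> carrier_mat n n" and i: "i < n * k" and j: "j < n * k"
  shows "(kron_id n k E * pure_state (n*k) \<phi>) $$ (i,j)
     = (\<Sum>a<n. E $$ (i div k, a) * \<phi> (a * k + i mod k)) * cnj (\<phi> j)"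
proof -
  have "i mod k < k"
    using i by (cases k) auto
  have "(kron_id n k E * pure_state (n*k) \<phi>) $$ (i,j)
      = (\<Sum>l<n*k. kron_id n k E $$ (i,l) * pure_state (n*k) \<phi> $$ (l,j))"
    using i j by (simp add: kron_id_def pure_state_def scalar_prod_def atLeast0LessThan)
  also have "\<dots> = (\<Sum>a<n. \<Sum>b<k. kron_id n k E $$ (i,a*k+b) * pure_state (n*k) \<phi> $$ (a*k+b,j))"
    by (rule sum_lessThan_mult)
  also have "\<dots> = (\<Sum>a<n. \<Sum>b<k. if b = i mod k then E $$ (i div k, a) * \<phi> (a*k+b) * cnj (\<phi> j) else 0)"
    using i j by (intro sum.cong refl) (auto simp: kron_id_def pure_state_def mult_add_less_mult)
  also have "\<dots> = (\<Sum>a<n. E $$ (i div k, a) * \<phi> (a * k + i mod k) * cnj (\<phi> j))"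
    using \<open>i mod k < k\<close> by (intro sum.cong refl) (simp add: sum.delta')
  finally show ?thesis
    by (simp add: sum_distrib_right)
qed

lemma ptrace_X_kron_id_pure_state:
  assumes E: "E \<in> carrier_mat n n"
  shows "ptrace_X n k (kron_id n k E * pure_state (n*k) \<phi>)
     = mat k k (\<lambda>(b,b'). sesq n E (\<lambda>a. \<phi> (a*k + b')) (\<lambda>a. \<phi> (a*k + b)))"
proof (rule eq_matI)
  fix b b' assume "b < dim_row (mat k k (\<lambda>(b,b'). sesq n E (\<lambda>a. \<phi> (a*k + b')) (\<lambda>a. \<phi> (a*k + b))))"
    and "b' < dim_col (mat k k (\<lambda>(b,b'). sesq n E (\<lambda>a. \<phi> (a*k + b')) (\<lambda>a. \<phi> (a*k + b))))"
  then have b: "b < k" "b' < k"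
    by auto
  have "ptrace_X n k (kron_id n k E * pure_state (n*k) \<phi>) $$ (b,b')
     = (\<Sum>a<n. (\<Sum>a'<n. E $$ (a, a') * \<phi> (a' * k + b)) * cnj (\<phi> (a*k + b')))"
    using b by (simp add: ptrace_X_def kron_id_mult_pure_state_index[OF E] mult_add_less_mult)
  also have "\<dots> = sesq n E (\<lambda>a. \<phi> (a*k + b')) (\<lambda>a. \<phi> (a*k + b))"
    unfolding sesq_def by (intro sum.cong refl) (simp add: sum_distrib_left sum_distrib_right ac_simps)
  finally show "ptrace_X n k (kron_id n k E * pure_state (n*k) \<phi>) $$ (b,b')
      = mat k k (\<lambda>(b,b'). sesq n E (\<lambda>a. \<phi> (a*k + b')) (\<lambda>a. \<phi> (a*k + b))) $$ (b,b')"
    using b by simp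
qed (auto simp: ptrace_X_def)

lemma mtrace_ptrace_X:
  assumes "R \<in> carrier_mat (n*k) (n*k)"
  shows "mtrace (ptrace_X n k R) = mtrace R"
proof -
  have "mtrace R = (\<Sum>a<n. \<Sum>b<k. R $$ (a*k+b, a*k+b))"
    using assms unfolding mtrace_def by (simp add: sum_lessThan_mult)
  also have "\<dots> = (\<Sum>b<k. \<Sum>a<n. R $$ (a*k+b, a*k+b))"
    by (rule sum.swap)
  finally show ?thesis
    by (simp add: mtrace_def ptrace_X_def)
qed

lemma sesq_sum_left: "sesq d A (\<lambda>i. \<Sum>b\<in>B. x b i) y = (\<Sum>b\<in>B. sesq d A (x b) y)"
proof -
  have "sesq d A (\<lambda>i. \<Sum>b\<in>B. x b i) y = (\<Sum>i<d. \<Sum>j<d. \<Sum>b\<in>B. cnj (x b i) * A $$ (i,j) * y j)"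
    by (simp add: sesq_def cnj_sum sum_distrib_right)
  also have "\<dots> = (\<Sum>b\<in>B. \<Sum>i<d. \<Sum>j<d. cnj (x b i) * A $$ (i,j) * y j)"
    by (simp only: sum.swap[of _ "{..<d}" B])
  finally show ?thesis
    by (simp add: sesq_def)
qed

lemma sesq_sum_right: "sesq d A x (\<lambda>j. \<Sum>c\<in>C. y c j) = (\<Sum>c\<in>C. sesq d A x (y c))"
proof -
  have "sesq d A x (\<lambda>j. \<Sum>c\<in>C. y c j) = (\<Sum>i<d. \<Sum>j<d. \<Sum>c\<in>C. cnj (x i) * A $$ (i,j) * y c j)"
    by (simp add: sesq_def sum_distrib_left)
  also have "\<dots> = (\<Sum>c\<in>C. \<Sum>i<d. \<Sum>j<d. cnj (x i) * A $$ (i,j) * y c j)"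
    by (simp only: sum.swap[of _ "{..<d}" C])
  finally show ?thesis
    by (simp add: sesq_def)
qed

lemma sesq_scale: "sesq d A (\<lambda>i. c * x i) (\<lambda>j. c' * y j) = cnj c * c' * sesq d A x y"
  unfolding sesq_def by (simp add: sum_distrib_left ac_simps)

lemma psd_ptrace_X_kron_id_pure_state:
  assumes E: "psd n E"
  shows "psd k (ptrace_X n k (kron_id n k E * pure_state (n*k) \<phi>))"
proof -
  define u where "u b = (\<lambda>a. \<phi> (a*k + b))" for b
  define C where "C = mat k k (\<lambda>(b,b'). sesq n E (u b') (u b))"
  have "sesq k C v v = sesq n E (\<lambda>a. \<Sum>b<k. cnj (v b) * u b a) (\<lambda>a. \<Sum>b<k. cnj (v b) * u b a)" for v
  proof -
    have "sesq k C v v = (\<Sum>b<k. \<Sum>b'<k. v b' * cnj (v b) * sesq n E (u b') (u b))"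
      unfolding sesq_def[of k] C_def by (intro sum.cong refl) (simp add: ac_simps)
    also have "\<dots> = (\<Sum>b'<k. \<Sum>b<k. v b' * cnj (v b) * sesq n E (u b') (u b))"
      by (rule sum.swap)
    finally show ?thesis
      by (simp add: sesq_sum_left sesq_sum_right sesq_scale)
  qed
  moreover have "ptrace_X n k (kron_id n k E * pure_state (n*k) \<phi>) = C"
    unfolding C_def u_def by (rule ptrace_X_kron_id_pure_state[OF psdD(1)[OF E]])
  ultimately show ?thesis
    using psdD[OF E] unfolding psd_iff_sesq by (simp add: C_def)
qed

lemma meas_cond_entropy_pure_state_nonneg:
  assumes "is_povm n m E"
  shows "0 \<le> meas_cond_entropy n k (pure_state (n*k) \<phi>) m E"
  unfolding meas_cond_entropy_def Let_def
proof (intro sum_nonneg)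
  fix a assume "a \<in> {..<m}"
  then have E: "psd n (E a)"
    using assms unfolding is_povm_def by simp
  define M where "M = kron_id n k (E a) * pure_state (n*k) \<phi>"
  define p where "p = Re (mtrace M)"
  have C: "psd k (ptrace_X n k M)"
    unfolding M_def by (rule psd_ptrace_X_kron_id_pure_state[OF E])
  have trace: "mtrace (ptrace_X n k M) = mtrace M"
    unfolding M_def by (intro mtrace_ptrace_X mult_carrier_mat[OF kron_id_carrier pure_state_carrier])
  have "0 \<le> p"
    unfolding p_def trace[symmetric] by (rule psd_trace_nonneg[OF C])
  moreover have "0 \<le> vn_entropy (of_real (1/p) \<cdot>\<^sub>m ptrace_X n k M)" if "0 < p"
    using that psdD(1)[OF C]
    by (intro vn_entropy_nonneg[OF psd_smult[OF C]]) (simp_all add: mtrace_smult trace p_def)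
  ultimately show "0 \<le> Re (mtrace M) * vn_entropy (of_real (1 / Re (mtrace M)) \<cdot>\<^sub>m ptrace_X n k M)"
    unfolding p_def[symmetric] by (cases "p = 0") auto
qed

definition basis_proj :: "nat \<Rightarrow> nat \<Rightarrow> complex mat" where
  "basis_proj n a = mat n n (\<lambda>(i,j). if i = a \<and> j = a then 1 else 0)"

lemma basis_proj_carrier: "basis_proj n a \<in> carrier_mat n n"
  by (simp add: basis_proj_def)

lemma sesq_basis_proj:
  assumes "a < n"
  shows "sesq n (basis_proj n a) x y = cnj (x a) * y a"
proof -
  have "sesq n (basis_proj n a) x y = (\<Sum>i<n. \<Sum>j<n. if j = a then if i = a then cnj (x a) * y a else 0 else 0)"
    unfolding sesq_def by (intro sum.cong refl) (simp add: basis_proj_def)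
  then show ?thesis
    using assms by simp
qed

lemma is_povm_basis_proj: "is_povm n n (basis_proj n)"
  unfolding is_povm_def
proof (intro conjI allI impI)
  fix a assume "a < n"
  have "sesq n (basis_proj n a) v v = of_real ((cmod (v a))\<^sup>2)" for v
    unfolding sesq_basis_proj[OF \<open>a < n\<close>] complex_norm_square by (simp only: ac_simps)
  then show "psd n (basis_proj n a)"
    unfolding psd_iff_sesq by (simp add: basis_proj_def)
next
  fix i j assume "i < n" "j < n"
  then have "(\<Sum>a<n. basis_proj n a $$ (i,j)) = (\<Sum>a<n. if a = i then (if i = j then 1 else 0) else 0)"
    by (intro sum.cong) (auto simp: basis_proj_def)
  then show "(\<Sum>a<n. basis_proj n a $$ (i,j)) = (if i = j then 1 else 0)"
    using \<open>i < n\<close> by simp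
qed

lemma vn_entropy_scaled_pure_state:
  assumes "p = (\<Sum>i<d. (cmod (w i))\<^sup>2)" "0 < p"
  shows "vn_entropy (of_real (1/p) \<cdot>\<^sub>m pure_state d w) = 0"
proof -
  define u where "u i = w i / of_real (sqrt p)" for i
  have "of_real (sqrt p) * of_real (sqrt p) = (of_real p :: complex)"
    using assms(2) by (simp flip: of_real_mult)
  then have "of_real (1/p) \<cdot>\<^sub>m pure_state d w = pure_state d u"
    using assms(2) by (intro eq_matI) (auto simp: pure_state_def u_def field_simps)
  moreover have "(\<Sum>i<d. (cmod (u i))\<^sup>2) = 1"
    using assms by (simp add: u_def norm_divide power_divide flip: sum_divide_distrib)
  ultimately show ?thesis
    by (simp add: vn_entropy_pure_state)
qed

lemma meas_cond_entropy_basis_proj: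
  "meas_cond_entropy n k (pure_state (n*k) \<phi>) n (basis_proj n) = 0"
  unfolding meas_cond_entropy_def Let_def
proof (intro sum.neutral ballI)
  fix a assume "a \<in> {..<n}"
  then have a: "a < n" by simp
  define M where "M = kron_id n k (basis_proj n a) * pure_state (n*k) \<phi>"
  define w where "w b = \<phi> (a*k + b)" for b
  define p where "p = (\<Sum>b<k. (cmod (w b))\<^sup>2)"
  have C: "ptrace_X n k M = pure_state k w"
    unfolding M_def ptrace_X_kron_id_pure_state[OF basis_proj_carrier] sesq_basis_proj[OF a]
    by (intro eq_matI) (auto simp: pure_state_def w_def)
  have "mtrace M = mtrace (pure_state k w)"
    unfolding C[symmetric] M_def
    by (intro mtrace_ptrace_X[symmetric] mult_carrier_mat[OF kron_id_carrier pure_state_carrier])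
  also have "\<dots> = of_real p"
    unfolding p_def of_real_sum complex_norm_square by (simp add: mtrace_def pure_state_def)
  finally have "Re (mtrace M) = p"
    by simp
  moreover have "0 \<le> p"
    unfolding p_def by (simp add: sum_nonneg)
  ultimately show "Re (mtrace M) * vn_entropy (of_real (1 / Re (mtrace M)) \<cdot>\<^sub>m ptrace_X n k M) = 0"
    unfolding C using vn_entropy_scaled_pure_state[OF p_def] by (cases "p = 0") auto
qed

lemma discord_pure_state:
  assumes "(\<Sum>i<n*k. (cmod (\<phi> i))\<^sup>2) = 1"
  shows "discord n k (pure_state (n*k) \<phi>) = vn_entropy (ptrace_Y n k (pure_state (n*k) \<phi>))"
proof -
  have "(INF mE \<in> {(m, E). is_povm n m E}. meas_cond_entropy n k (pure_state (n*k) \<phi>) (fst mE) (snd mE)) = 0"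
  proof (rule cInf_eq_minimum)
    show "0 \<in> (\<lambda>mE. meas_cond_entropy n k (pure_state (n*k) \<phi>) (fst mE) (snd mE)) ` {(m, E). is_povm n m E}"
      using is_povm_basis_proj meas_cond_entropy_basis_proj by (force simp: image_iff)
  qed (auto intro: meas_cond_entropy_pure_state_nonneg)
  then show ?thesis
    unfolding discord_def using vn_entropy_pure_state[OF assms] by simp
qed

section \<open>The state psi3\<close>

definition psi3_amp :: "nat \<Rightarrow> real" where
  "psi3_amp j = (if j = 7 then -5 else 1)"

lemma psi3_index: "j < 8 \<Longrightarrow> psi3 $ j = of_real (psi3_amp j / (4 * sqrt 2))"
  by (simp add: psi3_def psi3_amp_def)

lemma rho3_index:
  assumes "i < 8" "j < 8"
  shows "rho3 $$ (i,j) = of_real (psi3_amp i * psi3_amp j / 32)"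
proof -
  have "psi3_amp i / (4 * sqrt 2) * (psi3_amp j / (4 * sqrt 2)) = psi3_amp i * psi3_amp j / 32"
    by (simp add: field_simps)
  then show ?thesis
    using assms by (simp add: rho3_def psi3_index flip: of_real_mult)
qed

lemma rho3_pure_state: "rho3 = pure_state 8 (($) psi3)"
  by (simp add: rho3_def pure_state_def)

lemma psi3_normalized: "(\<Sum>j<8. (cmod (psi3 $ j))\<^sup>2) = 1"
proof -
  have "(\<Sum>j<8. (cmod (psi3 $ j))\<^sup>2) = (\<Sum>j<8. (psi3_amp j)\<^sup>2 / 32)"
    by (intro sum.cong refl)
      (simp only: lessThan_iff psi3_index norm_of_real power2_abs, simp add: power_divide power_mult_distrib)
  also have "\<dots> = 1"
    by (simp add: eval_nat_numeral psi3_amp_def)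
  finally show ?thesis .
qed

lemma old_index_eq:
  "old_index ord i = i div 4 mod 2 * 2 ^ (2 - ord!0) + i div 2 mod 2 * 2 ^ (2 - ord!1) + i mod 2 * 2 ^ (2 - ord!2)"
proof -
  have "(\<Sum>k<3. f k) = f 0 + f 1 + (f 2 :: nat)" for f :: "nat \<Rightarrow> nat"
    by (simp add: eval_nat_numeral)
  then show ?thesis
    unfolding old_index_def by simp
qed

lemma old_index_qubit_permutation:
  assumes "ord \<in> {[0,1,2], [0,2,1], [1,0,2], [1,2,0], [2,0,1], [2,1,0]}" and "i < 8"
  shows "old_index ord i < 8 \<and> psi3_amp (old_index ord i) = psi3_amp i"
proof -
  have "i \<in> {0,1,2,3,4,5,6,7}"
    using assms(2) by auto
  then show ?thesis
    using assms(1) by (auto simp: old_index_eq psi3_amp_def)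
qed

lemma reorder_rho3:
  assumes "ord \<in> {[0,1,2], [0,2,1], [1,0,2], [1,2,0], [2,0,1], [2,1,0]}"
  shows "reorder ord rho3 = rho3"
proof (rule eq_matI)
  fix i j assume "i < dim_row rho3" "j < dim_col rho3"
  then have "i < 8" "j < 8"
    by (auto simp: rho3_def)
  then show "reorder ord rho3 $$ (i, j) = rho3 $$ (i, j)"
    using old_index_qubit_permutation[OF assms] by (simp add: reorder_def rho3_index)
qed (auto simp: reorder_def rho3_def)

lemma rho3_marginal_A:
  "ptrace_Y 2 4 rho3 = mat 2 2 (\<lambda>(a,b). if a = b then (if a = 0 then 1/8 else 7/8) else -1/16)"
  by (rule eq_matI) (auto simp: ptrace_Y_def rho3_index psi3_amp_def less_Suc_eq numeral_eq_Suc)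

lemma rho3_marginal_AB:
  "ptrace_Y 4 2 rho3 = mat 4 4 (\<lambda>(a,b). if a = 3 \<and> b = 3 then 13/16 else if a = 3 \<or> b = 3 then -1/8 else 1/16)"
  by (rule eq_matI) (auto simp: ptrace_Y_def rho3_index psi3_amp_def less_Suc_eq numeral_eq_Suc)

lemma sqrt_37_bounds: "0 < sqrt 37" "sqrt 37 < 8"
proof -
  show "0 < sqrt 37"
    by simp
  have "sqrt 37 < sqrt (8\<^sup>2)"
    by (subst real_sqrt_less_iff) simp
  then show "sqrt 37 < 8"
    by simp
qed

lemma quadratic_factorization:
  "[:27/256, -1, 1:] = [:- of_real ((8 + sqrt 37) / 16), 1:] * [:- of_real ((8 - sqrt 37) / 16), 1 :: complex:]"
proof -
  let ?a = "of_real ((8 + sqrt 37) / 16) :: complex" and ?b = "of_real ((8 - sqrt 37) / 16) :: complex"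
  have "(8 + sqrt 37) / 16 * ((8 - sqrt 37) / 16) = 27/256"
    by (simp add: field_simps algebra_simps)
  then have "?a * ?b = 27/256"
    by (metis of_real_divide of_real_mult of_real_numeral)
  moreover have "(8 + sqrt 37) / 16 + (8 - sqrt 37) / 16 = 1"
    by (simp add: field_simps)
  then have "?a + ?b = 1"
    by (metis of_real_add of_real_1)
  moreover have "[:- ?a, 1:] * [:- ?b, 1:] = [:?a * ?b, -(?a + ?b), 1:]"
    by (simp add: algebra_simps)
  ultimately show ?thesis
    by simp
qed

lemma char_poly_rho3_marginal_A: "char_poly (ptrace_Y 2 4 rho3) = [:27/256, -1, 1:]"
proof (rule char_poly_eqI)
  show "ptrace_Y 2 4 rho3 \<in> carrier_mat 2 2"
    by (simp add: rho3_marginal_A)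
  show "det (- char_matrix (ptrace_Y 2 4 rho3) x) = poly [:27/256, -1, 1:] x" for x
    by (subst det_2x2) (auto simp: rho3_marginal_A char_matrix_def field_simps)
qed

lemma char_poly_rho3_marginal_AB: "char_poly (ptrace_Y 4 2 rho3) = [:0, 1:] ^ 2 * [:27/256, -1, 1:]"
proof (rule char_poly_eqI)
  show "ptrace_Y 4 2 rho3 \<in> carrier_mat 4 4"
    by (simp add: rho3_marginal_AB)
  show "det (- char_matrix (ptrace_Y 4 2 rho3) x) = poly ([:0, 1:] ^ 2 * [:27/256, -1, 1:]) x" for x
    by (subst det_4x4) (auto simp: rho3_marginal_AB char_matrix_def field_simps power2_eq_square)
qed

lemma vn_entropy_rho3_marginals:
  "vn_entropy (ptrace_Y 2 4 rho3) = eta ((8 + sqrt 37) / 16) + eta ((8 - sqrt 37) / 16)"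
  "vn_entropy (ptrace_Y 4 2 rho3) = eta ((8 + sqrt 37) / 16) + eta ((8 - sqrt 37) / 16)"
proof -
  have "0 < (8 - sqrt 37) / 16" "(8 - sqrt 37) / 16 < (8 + sqrt 37) / 16"
    using sqrt_37_bounds by simp_all
  then have roots: "(8 + sqrt 37) / 16 \<noteq> (8 - sqrt 37) / 16" "(8 + sqrt 37) / 16 \<noteq> 0" "(8 - sqrt 37) / 16 \<noteq> 0"
    by linarith+
  show "vn_entropy (ptrace_Y 2 4 rho3) = eta ((8 + sqrt 37) / 16) + eta ((8 - sqrt 37) / 16)"
  proof (rule vn_entropy_two_eigenvalues[OF _ _ roots])
    show "ptrace_Y 2 4 rho3 \<in> carrier_mat 2 2"
      by (simp add: rho3_marginal_A)
    show "char_poly (ptrace_Y 2 4 rho3) = [:0, 1:] ^ 0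
        * ([:- of_real ((8 + sqrt 37) / 16), 1:] * [:- of_real ((8 - sqrt 37) / 16), 1:])"
      unfolding char_poly_rho3_marginal_A quadratic_factorization by simp
  qed
  show "vn_entropy (ptrace_Y 4 2 rho3) = eta ((8 + sqrt 37) / 16) + eta ((8 - sqrt 37) / 16)"
  proof (rule vn_entropy_two_eigenvalues[OF _ _ roots])
    show "ptrace_Y 4 2 rho3 \<in> carrier_mat 4 4"
      by (simp add: rho3_marginal_AB)
    show "char_poly (ptrace_Y 4 2 rho3) = [:0, 1:] ^ 2
        * ([:- of_real ((8 + sqrt 37) / 16), 1:] * [:- of_real ((8 - sqrt 37) / 16), 1:])"
      unfolding char_poly_rho3_marginal_AB quadratic_factorization ..
  qed
qed

theorem lemma3:
  shows "discord 2 4 (reorder [0,1,2] rho3) = discord 2 4 (reorder [1,0,2] rho3)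
   \<and> discord 2 4 (reorder [1,0,2] rho3) = discord 2 4 (reorder [2,0,1] rho3)
   \<and> discord 2 4 (reorder [2,0,1] rho3) = discord 4 2 (reorder [0,1,2] rho3)
   \<and> discord 4 2 (reorder [0,1,2] rho3) = discord 4 2 (reorder [0,2,1] rho3)
   \<and> discord 4 2 (reorder [0,2,1] rho3) = discord 4 2 (reorder [1,2,0] rho3)
   \<and> discord 4 2 (reorder [1,2,0] rho3) =
       - (1/16) * (8 + sqrt 37) * log 2 ((1/16) * (8 + sqrt 37))
       - (1/16) * (8 - sqrt 37) * log 2 ((1/16) * (8 - sqrt 37))
   \<and> discord 2 4 (reorder [0,1,2] rho3) = vn_entropy (ptrace_Y 2 4 rho3)
   \<and> discord 4 2 (reorder [0,1,2] rho3) = vn_entropy (ptrace_Y 4 2 rho3)"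
proof -
  have discord_A: "discord 2 4 rho3 = vn_entropy (ptrace_Y 2 4 rho3)"
    using discord_pure_state[where n = 2 and k = 4] psi3_normalized by (simp add: rho3_pure_state)
  have discord_AB: "discord 4 2 rho3 = vn_entropy (ptrace_Y 4 2 rho3)"
    using discord_pure_state[where n = 4 and k = 2] psi3_normalized by (simp add: rho3_pure_state)
  have "0 < 8 + sqrt 37" "0 < 8 - sqrt 37"
    using sqrt_37_bounds by linarith+
  then show ?thesis
    by (simp add: reorder_rho3 discord_A discord_AB vn_entropy_rho3_marginals eta_pos)
qed

end
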